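(* If the sequent $\vdash A$ (with empty context) has a derivation in LJB, then $\vdash A$ also has a derivation in LJ$^{+}$.
   Context: Minimal predicate logic: terms $t ::= x \mid f(t_1,\dots,t_n)$, formulas $A ::= P(t_1,\dots,t_n)\mid A\rightarrow A\mid \forall x\,A$. Positivity: atomic formulas are positive and negative; $A\rightarrow B$ is positive (resp. negative) if $A$ is negative (resp. positive) and $B$ positive (resp. negative); $\forall x\,A$ is positive if $A$ is positive, never negative. A sequent is positive if its context formulas are negative and its right-hand side positive; both calculi below are for positive sequents. LJ$^{+}$: sequents $\Gamma\vdash A$ with $\Gamma$ a finite multiset of formulas, formulas modulo $\alpha$-equivalence; rules (L$\rightarrow$) from $\Gamma, A_1\rightarrow\dots\rightarrow A_n\rightarrow P\vdash A_i$ ($i=1..n$, $n\ge0$) infer $\Gamma, A_1\rightarrow\dots\rightarrow A_n\rightarrow P\vdash P$, $P$ atomic; (R$\forall$) from $\Gamma\vdash A$ infer $\Gamma\vdash\forall x\,A$ if $x$ not free in $\Gamma$; (R$\rightarrow$) from $\Gamma,A\vdash B$ infer $\Gamma\vdash A\rightarrow B$. LJB: an LJB-context is a finite multiset of items; an item is a formula or $[\Gamma]_V$ ($V$ a finite set of variables bound by the bracket, $\Gamma$ an LJB-context); $FV([\Gamma]_V)=FV(\Gamma)\setminus V$. Cleaning rules (anywhere in a context, contexts being multisets): $[I,\Gamma]_V\longrightarrow I,[\Gamma]_V$ if $FV(I)\cap V=\emptyset$; $[\ ]_V\longrightarrow\emptyset$; $I\,I\longrightarrow I$. This system terminates; $\Gamma{\downarrow}$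 denotes the normal form of $\Gamma$ obtained with a fixed arbitrary strategy. LJB rules apply only to LJB-sequents $\Gamma\vdash A$ with $\Gamma$ in normal form and in which, in each formula, bound variables are pairwise distinct and distinct from free variables; formulas are not identified modulo $\alpha$. Rules: (L$\rightarrow$) from $\Gamma'\vdash A_1,\dots,\Gamma'\vdash A_n$ infer $\Gamma\vdash P$, where $\Gamma=\Gamma_1,[\Gamma_2,[\dots\Gamma_{i-1},[\Gamma_i, A_1\rightarrow\dots\rightarrow A_n\rightarrow P]_{V_{i-1}}\dots]_{V_2}]_{V_1}$ ($i\ge1$), $\Gamma'=([\dots[[\Gamma_1]_{V_1},\Gamma_2]_{V_2},\dots,\Gamma_{i-1}]_{V_{i-1}},\Gamma_i,A_1\rightarrow\dots\rightarrow A_n\rightarrow P){\downarrow}$, $P$ atomic with no free variable in $V_1\cup\dots\cup V_{i-1}$; (R$\forall$) from $[\Gamma]_V{\downarrow}\vdash A$ infer $\Gamma\vdash\forall x\,A$, where $V$ is the set of all variables bound in $\forall x\,A$; (R$\rightarrow$) from $(\Gamma,A){\downarrow}\vdash B$ infer $\Gamma\vdash A\rightarrow B$. *)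

theory Defs
  imports Main "HOL-Library.Multiset"
begin

datatype trm = Var nat | Fn nat "trm list"

datatype fm = Atom nat "trm list" | Imp fm fm | All nat fm

primrec fvt :: "trm \<Rightarrow> nat set" where
  "fvt (Var x) = {x}"
| "fvt (Fn f ts) = \<Union> (set (map fvt ts))"

primrec fv :: "fm \<Rightarrow> nat set" where
  "fv (Atom p ts) = \<Union> (set (map fvt ts))"
| "fv (Imp A B) = fv A \<union> fv B"
| "fv (All x A) = fv A - {x}"

primrec bv :: "fm \<Rightarrow> nat list" where
  "bv (Atom p ts) = []"
| "bv (Imp A B) = bv A @ bv B"
| "bv (All x A) = x # bv A"

definition well_named :: "fm \<Rightarrow> bool" where
  "well_named A \<longleftrightarrow> distinct (bv A) \<and> set (bv A) \<inter> fv A = {}"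

fun is_atom :: "fm \<Rightarrow> bool" where
  "is_atom (Atom p ts) = True"
| "is_atom _ = False"

section \<open>Alpha-equivalence (via de Bruijn levels)\<close>

datatype dtrm = DBv nat | DFv nat | DFn nat "dtrm list"
datatype dfm = DAtom nat "dtrm list" | DImp dfm dfm | DAll dfm

primrec trt :: "(nat \<Rightarrow> nat option) \<Rightarrow> trm \<Rightarrow> dtrm" where
  "trt e (Var x) = (case e x of Some l \<Rightarrow> DBv l | None \<Rightarrow> DFv x)"
| "trt e (Fn f ts) = DFn f (map (trt e) ts)"

primrec trf :: "(nat \<Rightarrow> nat option) \<Rightarrow> nat \<Rightarrow> fm \<Rightarrow> dfm" where
  "trf e d (Atom p ts) = DAtom p (map (trt e) ts)"
| "trf e d (Imp A B) = DImp (trf e d A) (trf e d B)"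
| "trf e d (All x A) = DAll (trf (e(x := Some d)) (Suc d) A)"

definition alpha :: "fm \<Rightarrow> fm \<Rightarrow> bool" where
  "alpha A B \<longleftrightarrow> trf (\<lambda>_. None) 0 A = trf (\<lambda>_. None) 0 B"

fun pos :: "fm \<Rightarrow> bool" and neg :: "fm \<Rightarrow> bool" where
  "pos (Atom p ts) = True"
| "neg (Atom p ts) = True"
| "pos (Imp A B) = (neg A \<and> pos B)"
| "neg (Imp A B) = (pos A \<and> neg B)"
| "pos (All x A) = pos A"
| "neg (All x A) = False"

definition pos_seq :: "fm multiset \<Rightarrow> fm \<Rightarrow> bool" where
  "pos_seq G A \<longleftrightarrow> (\<forall>B\<in>#G. neg B) \<and> pos A"

text \<open>Formulas are considered modulo alpha-equivalence: this is rendered by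
  an explicit closure rule allowing any formula of a sequent to be replaced by
  an alpha-equivalent one, so that derivability is a property of alpha-classes.\<close>
inductive ljp :: "fm multiset \<Rightarrow> fm \<Rightarrow> bool" where
  ljp_L: "\<lbrakk> \<forall>a\<in>set As. ljp (add_mset (foldr Imp As (Atom p ts)) G) a;
           pos_seq (add_mset (foldr Imp As (Atom p ts)) G) (Atom p ts) \<rbrakk>
         \<Longrightarrow> ljp (add_mset (foldr Imp As (Atom p ts)) G) (Atom p ts)"
| ljp_RAll: "\<lbrakk> ljp G A; \<forall>B\<in>#G. x \<notin> fv B; pos_seq G (All x A) \<rbrakk> \<Longrightarrow> ljp G (All x A)"
| ljp_RImp: "\<lbrakk> ljp (add_mset A G) B; pos_seq G (Imp A B) \<rbrakk> \<Longrightarrow> ljp G (Imp A B)"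
| ljp_alpha: "\<lbrakk> ljp G A; rel_mset alpha G G'; alpha A A' \<rbrakk> \<Longrightarrow> ljp G' A'"

datatype item = Fm fm | Br "nat set" "item multiset"

primrec fvi :: "item \<Rightarrow> nat set" where
  "fvi (Fm A) = fv A"
| "fvi (Br V G) = \<Union> (set_mset (image_mset fvi G)) - V"

primrec fmsi :: "item \<Rightarrow> fm set" where
  "fmsi (Fm A) = {A}"
| "fmsi (Br V G) = \<Union> (set_mset (image_mset fmsi G))"

definition fms :: "item multiset \<Rightarrow> fm set" where
  "fms G = \<Union> (fmsi ` set_mset G)"

inductive clean1 :: "item multiset \<Rightarrow> item multiset \<Rightarrow> bool" where
  cl_out: "fvi I \<inter> V = {} \<Longrightarrow>
      clean1 (add_mset (Br V (add_mset I G)) R) (add_mset I (add_mset (Br V G) R))"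
| cl_empty: "clean1 (add_mset (Br V {#}) R) R"
| cl_dup: "clean1 (add_mset I (add_mset I R)) (add_mset I R)"
| cl_in: "clean1 G G' \<Longrightarrow> clean1 (add_mset (Br V G) R) (add_mset (Br V G') R)"

definition clean_normal :: "item multiset \<Rightarrow> bool" where
  "clean_normal G \<longleftrightarrow> (\<nexists>G'. clean1 G G')"

text \<open>A (fixed, arbitrary) normalisation strategy: a function returning, for each
  context, a normal form reachable from it by cleaning steps.\<close>
definition nf_strategy :: "(item multiset \<Rightarrow> item multiset) \<Rightarrow> bool" where
  "nf_strategy nf \<longleftrightarrow> (\<forall>G. clean1\<^sup>*\<^sup>* G (nf G) \<and> clean_normal (nf G))"

definition ljb_seq :: "item multiset \<Rightarrow> fm \<Rightarrow> bool" where
  "ljb_seq G A \<longleftrightarrow> clean_normal G \<and> (\<forall>B\<in>fms G. well_named B \<and> neg B)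
      \<and> well_named A \<and> pos A"

text \<open>Nesting: nest [(V1,G1),...,(V(i-1),G(i-1))] D = G1,[G2,[...[D]_{V(i-1)}...]_{V2}]_{V1}\<close>
fun nest :: "(nat set \<times> item multiset) list \<Rightarrow> item multiset \<Rightarrow> item multiset" where
  "nest [] D = D"
| "nest ((V, G) # r) D = G + {# Br V (nest r D) #}"

text \<open>Turning inside out: flipb [(V1,G1),...,(V(i-1),G(i-1))]
   = [...[[G1]_{V1},G2]_{V2},...,G(i-1)]_{V(i-1)} (empty for the empty list).\<close>
definition flipb :: "(nat set \<times> item multiset) list \<Rightarrow> item multiset" where
  "flipb ps = foldl (\<lambda>acc (V, G). {# Br V (acc + G) #}) {#} ps"

inductive ljb :: "(item multiset \<Rightarrow> item multiset) \<Rightarrow> item multiset \<Rightarrow> fm \<Rightarrow> bool"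
  for nf :: "item multiset \<Rightarrow> item multiset" where
  ljb_L: "\<lbrakk> C = foldr Imp As (Atom p ts);
           \<forall>a\<in>set As. ljb nf (nf (flipb ps + add_mset (Fm C) Gi)) a;
           fv (Atom p ts) \<inter> (\<Union>(V, _)\<in>set ps. V) = {};
           ljb_seq (nest ps (add_mset (Fm C) Gi)) (Atom p ts) \<rbrakk>
         \<Longrightarrow> ljb nf (nest ps (add_mset (Fm C) Gi)) (Atom p ts)"
| ljb_RAll: "\<lbrakk> ljb nf (nf {# Br (set (bv (All x A))) G #}) A; ljb_seq G (All x A) \<rbrakk>
         \<Longrightarrow> ljb nf G (All x A)"
| ljb_RImp: "\<lbrakk> ljb nf (nf (add_mset (Fm A) G)) B; ljb_seq G (Imp A B) \<rbrakk>
         \<Longrightarrow> ljb nf G (Imp A B)"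

end

theory Submission
  imports Defs
begin

text \<open>An LJB context is read as an LJ$^{+}$ context by renaming, inside each bracket
  \<open>[\<Gamma>]\<^sub>V\<close>, the variables of \<open>V\<close> to fresh ones. All renamings only move variables to
  variables outside the finite set \<open>BV\<close> of bound variables of the end formula, so they never
  capture, and every LJB rule becomes an LJ$^{+}$ rule on the readings: (R\<open>\<forall>\<close>) with its
  bracket becomes (R\<open>\<forall>\<close>) with a fresh eigenvariable, up to alpha-equivalence; turning the
  context inside out in (L\<open>\<rightarrow>\<close>) changes the renaming only on bracket variables, which do
  not occur in the atom \<open>P\<close>; and cleaning only drops formulas of a reading, which is
  absorbed by building weakening into the invariant.\<close>

primrec rename_trm :: "(nat \<Rightarrow> nat) \<Rightarrow> trm \<Rightarrow> trm" where
  "rename_trm r (Var x) = Var (r x)"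
| "rename_trm r (Fn f ts) = Fn f (map (rename_trm r) ts)"

text \<open>Binders are kept in place, so this is capture-free only for renamings that move no
  variable onto a bound one; \<open>avoids\<close> guarantees this.\<close>
primrec rename :: "(nat \<Rightarrow> nat) \<Rightarrow> fm \<Rightarrow> fm" where
  "rename r (Atom p ts) = Atom p (map (rename_trm r) ts)"
| "rename r (Imp A B) = Imp (rename r A) (rename r B)"
| "rename r (All x A) = All x (rename (r(x := x)) A)"

definition avoids :: "nat set \<Rightarrow> (nat \<Rightarrow> nat) \<Rightarrow> bool" where
  "avoids BV r \<longleftrightarrow> (\<forall>u. r u \<noteq> u \<longrightarrow> r u \<notin> BV)"

lemma rename_trm_id [simp]: "rename_trm (\<lambda>u. u) t = t"
  by (induction t) (auto intro: map_idI)

lemma rename_id [simp]: "rename (\<lambda>u. u) A = A"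
proof (induction A)
  case (All x A)
  have "(\<lambda>u. u)(x := x) = (\<lambda>u. u)" by auto
  with All show ?case by simp
qed (auto intro: map_idI)

lemma rename_trm_cong: "\<forall>u\<in>fvt t. r u = r' u \<Longrightarrow> rename_trm r t = rename_trm r' t"
  by (induction t) auto

lemma rename_cong: "(\<And>u. u \<in> fv A \<Longrightarrow> r u = r' u) \<Longrightarrow> rename r A = rename r' A"
proof (induction A arbitrary: r r')
  case (Atom p ts)
  then show ?case by (auto intro!: rename_trm_cong)
next
  case (Imp A B)
  then show ?case by (metis fv.simps(2) rename.simps(2) Un_iff)
next
  case (All x A)
  have "rename (r(x := x)) A = rename (r'(x := x)) A"
    by (rule All.IH) (use All.prems in auto)
  then show ?case by simp
qed

lemma pos_rename [simp]: "pos (rename r A) = pos A"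
  and neg_rename [simp]: "neg (rename r A) = neg A"
  by (induction A arbitrary: r) auto

lemma rename_foldr_Imp: "rename r (foldr Imp As P) = foldr Imp (map (rename r) As) (rename r P)"
  by (induction As) auto

lemma set_bv_foldr_Imp: "set (bv (foldr Imp As P)) = (\<Union>a\<in>set As. set (bv a)) \<union> set (bv P)"
  by (induction As) auto

lemma finite_fvt: "finite (fvt t)"
  by (induction t) auto

lemma finite_fv: "finite (fv A)"
  by (induction A) (auto simp: finite_fvt)

lemma trt_rename:
  "(\<And>u. u \<in> fvt t \<Longrightarrow> e (s u) = e' (s' u) \<and> (e (s u) = None \<longrightarrow> s u = s' u))
   \<Longrightarrow> trt e (rename_trm s t) = trt e' (rename_trm s' t)"
  by (induction t) (auto split: option.splits)

lemma trf_rename: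
  "(\<And>u. u \<in> fv A \<Longrightarrow> e (s u) = e' (s' u) \<and> (e (s u) = None \<longrightarrow> s u = s' u)
       \<and> (s u = u \<or> s u \<notin> set (bv A)) \<and> (s' u = u \<or> s' u \<notin> set (bv A)))
   \<Longrightarrow> trf e d (rename s A) = trf e' d (rename s' A)"
proof (induction A arbitrary: e e' s s' d)
  case (Atom p ts) then show ?case by (auto intro!: trt_rename)
next
  case (Imp A B) show ?case using Imp.prems by (auto intro!: Imp.IH)
next
  case (All x A)
  show ?case
  proof (simp, rule All.IH, goal_cases)
    case (1 u)
    show ?case
    proof (cases "u = x")
      case False
      with 1 have u: "u \<in> fv (All x A)" by simp
      from All.prems[OF u] False have "s u \<noteq> x" "s' u \<noteq> x" by auto
      with All.prems[OF u] False show ?thesis by auto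
    qed simp
  qed
qed

lemma alpha_refl [simp]: "alpha A A"
  by (simp add: alpha_def)

lemma alpha_All_rename:
  assumes r: "avoids BV r" and x: "x \<in> BV" and bvA: "set (bv A) \<subseteq> BV"
    and y: "y \<notin> BV" "y \<notin> r ` fv A"
  shows "alpha (All y (rename (r(x := y)) A)) (rename r (All x A))"
  unfolding alpha_def
proof (simp, rule trf_rename, goal_cases)
  case (1 u)
  show ?case
  proof (cases "u = x")
    case True then show ?thesis using y bvA by auto
  next
    case False
    have "r u \<noteq> y" using y 1 by auto
    moreover have "r u \<noteq> x" using r x False unfolding avoids_def by auto
    moreover have "r u = u \<or> r u \<notin> set (bv A)" using r bvA unfolding avoids_def by auto
    ultimately show ?thesis using False by auto
  qed
qed

text \<open>A bracket \<open>[H]\<^sub>V\<close> is read as \<open>H\<close> under a renaming that may in addition move the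
  variables of \<open>V\<close>, always to variables outside \<open>BV\<close>.\<close>
inductive item_rep :: "nat set \<Rightarrow> (nat \<Rightarrow> nat) \<Rightarrow> item \<Rightarrow> fm multiset \<Rightarrow> bool"
  and ctxt_rep :: "nat set \<Rightarrow> (nat \<Rightarrow> nat) \<Rightarrow> item multiset \<Rightarrow> fm multiset \<Rightarrow> bool"
  for BV :: "nat set" where
  item_rep_Fm: "neg A \<Longrightarrow> item_rep BV r (Fm A) {#rename r A#}"
| item_rep_Br: "\<lbrakk>ctxt_rep BV r' H G; \<forall>u. u \<notin> V \<longrightarrow> r' u = r u; avoids BV r'\<rbrakk>
    \<Longrightarrow> item_rep BV r (Br V H) G"
| ctxt_rep_empty: "ctxt_rep BV r {#} {#}"
| ctxt_rep_add: "\<lbrakk>item_rep BV r I GI; ctxt_rep BV r M G\<rbrakk>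
    \<Longrightarrow> ctxt_rep BV r (add_mset I M) (GI + G)"

lemma ctxt_rep_remove:
  "ctxt_rep BV r M G \<Longrightarrow> I \<in># M \<Longrightarrow>
   \<exists>GI G'. item_rep BV r I GI \<and> ctxt_rep BV r (M - {#I#}) G' \<and> G = GI + G'"
proof (induction rule: item_rep_ctxt_rep.inducts(2)[where ?P1.0 = "\<lambda>_ _ _. True"])
  case (ctxt_rep_add r J GJ M G)
  show ?case
  proof (cases "I = J")
    case False
    then obtain GI G' where "item_rep BV r I GI" "ctxt_rep BV r (M - {#I#}) G'" "G = GI + G'"
      using ctxt_rep_add by auto
    moreover have "add_mset J M - {#I#} = add_mset J (M - {#I#})" using False by auto
    ultimately show ?thesis using ctxt_rep_add.hyps(1)
      by (metis item_rep_ctxt_rep.ctxt_rep_add union_lcomm)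
  qed (use ctxt_rep_add in auto)
qed auto

lemma ctxt_rep_add_mset_iff:
  "ctxt_rep BV r (add_mset I M) G \<longleftrightarrow>
   (\<exists>GI G'. item_rep BV r I GI \<and> ctxt_rep BV r M G' \<and> G = GI + G')"
  using ctxt_rep_remove[of BV r "add_mset I M" G I] by (auto intro: ctxt_rep_add)

lemma ctxt_rep_empty_iff: "ctxt_rep BV r {#} G \<longleftrightarrow> G = {#}"
  by (auto elim: ctxt_rep.cases intro: ctxt_rep_empty)

lemma ctxt_rep_single_iff [simp]: "ctxt_rep BV r {#I#} G \<longleftrightarrow> item_rep BV r I G"
  by (simp add: ctxt_rep_add_mset_iff ctxt_rep_empty_iff)

lemma ctxt_rep_union_iff:
  "ctxt_rep BV r (M1 + M2) G \<longleftrightarrow>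
   (\<exists>G1 G2. ctxt_rep BV r M1 G1 \<and> ctxt_rep BV r M2 G2 \<and> G = G1 + G2)"
proof (induction M1 arbitrary: G)
  case empty
  then show ?case by (simp add: ctxt_rep_empty_iff)
next
  case (add I M1)
  have "ctxt_rep BV r (add_mset I M1 + M2) G \<longleftrightarrow>
    (\<exists>GI G'. item_rep BV r I GI \<and> ctxt_rep BV r (M1 + M2) G' \<and> G = GI + G')"
    by (simp add: ctxt_rep_add_mset_iff)
  also have "\<dots> \<longleftrightarrow> (\<exists>GI G1 G2. item_rep BV r I GI \<and> ctxt_rep BV r M1 G1 \<and>
      ctxt_rep BV r M2 G2 \<and> G = GI + G1 + G2)"
    unfolding add.IH by (auto simp: add.assoc)
  also have "\<dots> \<longleftrightarrow>
      (\<exists>G1 G2. ctxt_rep BV r (add_mset I M1) G1 \<and> ctxt_rep BV r M2 G2 \<and> G = G1 + G2)"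
    by (auto simp: ctxt_rep_add_mset_iff)
  finally show ?case .
qed

lemma item_rep_Fm_iff: "item_rep BV r (Fm A) G \<longleftrightarrow> neg A \<and> G = {#rename r A#}"
  by (auto elim: item_rep.cases intro: item_rep_Fm)

lemma item_rep_Br_iff:
  "item_rep BV r (Br V H) G \<longleftrightarrow>
   (\<exists>r'. ctxt_rep BV r' H G \<and> (\<forall>u. u \<notin> V \<longrightarrow> r' u = r u) \<and> avoids BV r')"
  by (auto elim: item_rep.cases intro: item_rep_Br)

lemma
  shows item_rep_neg: "item_rep BV r I G \<Longrightarrow> \<forall>B\<in>#G. neg B"
    and ctxt_rep_neg: "ctxt_rep BV r M G \<Longrightarrow> \<forall>B\<in>#G. neg B"
  by (induction rule: item_rep_ctxt_rep.inducts) auto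

lemma
  shows item_rep_cong: "\<lbrakk>item_rep BV r I G; avoids BV r'; \<forall>u\<in>fvi I. r' u = r u\<rbrakk>
      \<Longrightarrow> item_rep BV r' I G"
    and ctxt_rep_cong: "\<lbrakk>ctxt_rep BV r M G; avoids BV r'; \<forall>u\<in>\<Union>(fvi ` set_mset M). r' u = r u\<rbrakk>
      \<Longrightarrow> ctxt_rep BV r' M G"
proof (induction arbitrary: r' and r' rule: item_rep_ctxt_rep.inducts)
  case (item_rep_Fm A r)
  have "rename r' A = rename r A" by (rule rename_cong) (use item_rep_Fm in auto)
  then show ?case using item_rep_Fm item_rep_ctxt_rep.item_rep_Fm by metis
next
  case (item_rep_Br rr H G V r)
  define rr' where "rr' = (\<lambda>u. if u \<in> V then rr u else r' u)"
  have "avoids BV rr'" using item_rep_Br unfolding avoids_def rr'_def by auto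
  moreover have "ctxt_rep BV rr' H G"
  proof (rule item_rep_Br.IH)
    show "avoids BV rr'" by fact
    show "\<forall>u\<in>\<Union>(fvi ` set_mset H). rr' u = rr u"
      using item_rep_Br unfolding rr'_def by auto
  qed
  moreover have "\<forall>u. u \<notin> V \<longrightarrow> rr' u = r' u" unfolding rr'_def by auto
  ultimately show ?case by (blast intro: item_rep_ctxt_rep.item_rep_Br)
next
  case (ctxt_rep_empty r)
  show ?case by (rule item_rep_ctxt_rep.ctxt_rep_empty)
next
  case (ctxt_rep_add r I GI M G)
  show ?case by (rule item_rep_ctxt_rep.ctxt_rep_add) (use ctxt_rep_add in auto)
qed

lemma ctxt_rep_clean1:
  "clean1 M M' \<Longrightarrow> ctxt_rep BV r M G \<Longrightarrow> avoids BV r \<Longrightarrow>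
   \<exists>G'. ctxt_rep BV r M' G' \<and> G' \<subseteq># G"
proof (induction arbitrary: r G rule: clean1.induct)
  case (cl_out I V H R)
  then obtain r' GI GH GR where
    "item_rep BV r' I GI" "ctxt_rep BV r' H GH" "\<forall>u. u \<notin> V \<longrightarrow> r' u = r u" "avoids BV r'"
    "ctxt_rep BV r R GR" and G: "G = GI + GH + GR"
    by (auto simp: ctxt_rep_add_mset_iff item_rep_Br_iff)
  moreover from this have "item_rep BV r I GI"
    by (rule_tac item_rep_cong) (use cl_out in auto)
  ultimately have "ctxt_rep BV r (add_mset I (add_mset (Br V H) R)) (GI + (GH + GR))"
    by (blast intro: ctxt_rep_add item_rep_Br)
  then show ?case using G by (intro exI[of _ G]) (simp add: ac_simps)
next
  case (cl_empty V R)
  then show ?case by (auto simp: ctxt_rep_add_mset_iff item_rep_Br_iff ctxt_rep_empty_iff)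
next
  case (cl_dup I R)
  then show ?case by (metis ctxt_rep_add_mset_iff mset_subset_eq_add_right)
next
  case (cl_in M M' V R)
  then obtain r' GB GR where
    "ctxt_rep BV r' M GB" "\<forall>u. u \<notin> V \<longrightarrow> r' u = r u" "avoids BV r'"
    "ctxt_rep BV r R GR" "G = GB + GR"
    by (auto simp: ctxt_rep_add_mset_iff item_rep_Br_iff)
  moreover from this cl_in.IH obtain GB' where "ctxt_rep BV r' M' GB'" "GB' \<subseteq># GB"
    by blast
  ultimately show ?case
    by (auto simp: ctxt_rep_add_mset_iff item_rep_Br_iff intro: subset_mset.add_right_mono)
qed

lemma ctxt_rep_cleaning:
  "clean1\<^sup>*\<^sup>* M M' \<Longrightarrow> ctxt_rep BV r M G \<Longrightarrow> avoids BV r \<Longrightarrow>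
   \<exists>G'. ctxt_rep BV r M' G' \<and> G' \<subseteq># G"
proof (induction arbitrary: G rule: rtranclp_induct)
  case (step M' M'')
  then show ?case by (meson ctxt_rep_clean1 subset_mset.order_trans)
qed auto

lemma fms_empty [simp]: "fms {#} = {}"
  and fms_add_mset [simp]: "fms (add_mset I G) = fmsi I \<union> fms G"
  and fms_union [simp]: "fms (G + H) = fms G \<union> fms H"
  by (simp_all add: fms_def)

lemma fms_clean1: "clean1 M M' \<Longrightarrow> fms M' \<subseteq> fms M"
  by (induction rule: clean1.induct) (auto simp: fms_def)

lemma fms_cleaning: "clean1\<^sup>*\<^sup>* M M' \<Longrightarrow> fms M' \<subseteq> fms M"
  by (induction rule: rtranclp_induct) (auto dest: fms_clean1)

lemma nf_strategy_cleaning: "nf_strategy nf \<Longrightarrow> clean1\<^sup>*\<^sup>* G (nf G)"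
  by (simp add: nf_strategy_def)

lemma fms_nf: "nf_strategy nf \<Longrightarrow> fms (nf G) \<subseteq> fms G"
  by (rule fms_cleaning[OF nf_strategy_cleaning])

definition flipb_onto :: "item multiset \<Rightarrow> (nat set \<times> item multiset) list \<Rightarrow> item multiset" where
  "flipb_onto acc ps = foldl (\<lambda>acc (V, G). {# Br V (acc + G) #}) acc ps"

lemma flipb_onto_Nil [simp]: "flipb_onto acc [] = acc"
  and flipb_onto_Cons [simp]: "flipb_onto acc ((V, G) # ps) = flipb_onto {# Br V (acc + G) #} ps"
  by (simp_all add: flipb_onto_def)

lemma flipb_eq_flipb_onto: "flipb ps = flipb_onto {#} ps"
  by (simp add: flipb_onto_def flipb_def)

lemma fms_nest: "fms (nest ps D) = fms D \<union> (\<Union>(V, G)\<in>set ps. fms G)"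
proof (induction ps)
  case (Cons p ps) then show ?case by (cases p) (simp add: fms_def Un_ac)
qed simp

lemma fms_flipb_onto: "fms (flipb_onto acc ps) = fms acc \<union> (\<Union>(V, G)\<in>set ps. fms G)"
proof (induction ps arbitrary: acc)
  case (Cons p ps) then show ?case by (cases p) (simp add: fms_def Un_ac)
qed simp

lemma fms_flipb_union: "fms (flipb ps + D) = fms (nest ps D)"
  by (auto simp: flipb_eq_flipb_onto fms_flipb_onto fms_nest)

lemma ctxt_rep_flipb_onto:
  "ctxt_rep BV r (nest ps D) G \<Longrightarrow> avoids BV r \<Longrightarrow> ctxt_rep BV r acc Ga \<Longrightarrow>
   \<exists>r'. avoids BV r' \<and> ctxt_rep BV r' (flipb_onto acc ps + D) (Ga + G) \<and>
        (\<forall>u. u \<notin> (\<Union>(V, _)\<in>set ps. V) \<longrightarrow> r' u = r u)"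
proof (induction ps arbitrary: r G acc Ga)
  case Nil
  then show ?case by (auto simp: ctxt_rep_union_iff)
next
  case (Cons p ps)
  obtain V H where p: "p = (V, H)" by (cases p)
  from Cons.prems(1) obtain rr GH GB where
    rH: "ctxt_rep BV r H GH" and rr: "ctxt_rep BV rr (nest ps D) GB"
    "\<forall>u. u \<notin> V \<longrightarrow> rr u = r u" "avoids BV rr" and G: "G = GB + GH"
    by (auto simp: p ctxt_rep_add_mset_iff item_rep_Br_iff)
  have "ctxt_rep BV r (acc + H) (Ga + GH)"
    using Cons.prems(3) rH by (auto simp: ctxt_rep_union_iff)
  then have "ctxt_rep BV rr {#Br V (acc + H)#} (Ga + GH)"
    using rr(2) Cons.prems(2) by (auto simp: item_rep_Br_iff)
  from Cons.IH[OF rr(1) rr(3) this] obtain r' where "avoids BV r'"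
    "ctxt_rep BV r' (flipb_onto {#Br V (acc + H)#} ps + D) (Ga + GH + GB)"
    "\<forall>u. u \<notin> (\<Union>(V, _)\<in>set ps. V) \<longrightarrow> r' u = rr u" by blast
  then show ?case using rr(2) G p by (auto simp: ac_simps)
qed

text \<open>The extra negative context \<open>D\<close> builds weakening into the invariant: cleaning discards
  formulas of a reading, and LJ$^{+}$ has no weakening rule.\<close>
definition translates_to_ljp :: "nat set \<Rightarrow> item multiset \<Rightarrow> fm \<Rightarrow> bool" where
  "translates_to_ljp BV M A \<longleftrightarrow>
     (\<forall>r G D. avoids BV r \<longrightarrow> ctxt_rep BV r M G \<longrightarrow> (\<forall>B\<in>#D. neg B) \<longrightarrow>
        ljp (G + D) (rename r A))"

lemma translates_to_ljpD:
  "\<lbrakk>translates_to_ljp BV M A; avoids BV r; ctxt_rep BV r M G; \<forall>B\<in>#D. neg B\<rbrakk>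
   \<Longrightarrow> ljp (G + D) (rename r A)"
  unfolding translates_to_ljp_def by blast

lemma translates_to_ljp_cleaning:
  assumes cl: "clean1\<^sup>*\<^sup>* M M'" and M': "translates_to_ljp BV M' A"
  shows "translates_to_ljp BV M A"
  unfolding translates_to_ljp_def
proof (intro allI impI)
  fix r G D
  assume r: "avoids BV r" and rep: "ctxt_rep BV r M G" and D: "\<forall>B\<in>#D. neg B"
  obtain G' where G': "ctxt_rep BV r M' G'" "G' \<subseteq># G"
    using ctxt_rep_cleaning[OF cl rep r] by blast
  have "\<forall>B\<in>#(G - G') + D. neg B"
    using ctxt_rep_neg[OF rep] D by (auto dest: in_diffD)
  then have "ljp (G' + ((G - G') + D)) (rename r A)"
    by (rule translates_to_ljpD[OF M' r G'(1)])
  moreover have "G = G' + (G - G')"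
    using G'(2) by (simp add: subset_mset.add_diff_inverse)
  ultimately show "ljp (G + D) (rename r A)" by (metis add.assoc)
qed

lemma translates_to_ljp_L:
  assumes C: "C = foldr Imp As (Atom p ts)"
    and prems: "\<forall>a\<in>set As. translates_to_ljp BV (flipb ps + add_mset (Fm C) Gi) a"
    and fresh: "fv (Atom p ts) \<inter> (\<Union>(V, _)\<in>set ps. V) = {}"
  shows "translates_to_ljp BV (nest ps (add_mset (Fm C) Gi)) (Atom p ts)"
  unfolding translates_to_ljp_def
proof (intro allI impI)
  fix r G D
  assume r: "avoids BV r" and rep: "ctxt_rep BV r (nest ps (add_mset (Fm C) Gi)) G"
    and D: "\<forall>B\<in>#D. neg B"
  obtain r' where r': "avoids BV r'" "ctxt_rep BV r' (flipb ps + add_mset (Fm C) Gi) G"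
    "\<forall>u. u \<notin> (\<Union>(V, _)\<in>set ps. V) \<longrightarrow> r' u = r u"
    using ctxt_rep_flipb_onto[OF rep r ctxt_rep_empty] by (auto simp: flipb_eq_flipb_onto)
  let ?P = "Atom p (map (rename_trm r) ts)"
  have "rename r' (Atom p ts) = ?P"
    using rename_cong[of "Atom p ts" r' r] r'(3) fresh by fastforce
  then have C': "rename r' C = foldr Imp (map (rename r') As) ?P"
    by (simp only: C rename_foldr_Imp)
  have "rename r' C \<in># G"
    using r'(2) by (auto simp: ctxt_rep_union_iff ctxt_rep_add_mset_iff item_rep_Fm_iff)
  then obtain G0 where GD: "G + D = add_mset (foldr Imp (map (rename r') As) ?P) G0"
    by (metis C' insert_DiffM union_mset_add_mset_left)
  have "\<forall>a\<in>set As. ljp (G + D) (rename r' a)"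
    using prems translates_to_ljpD[OF _ r'(1,2) D] by blast
  moreover have "\<forall>B\<in>#G + D. neg B" using ctxt_rep_neg[OF rep] D by auto
  ultimately have "ljp (add_mset (foldr Imp (map (rename r') As) ?P) G0) ?P"
    unfolding GD by (intro ljp_L) (auto simp: pos_seq_def)
  then show "ljp (G + D) (rename r (Atom p ts))" using GD by simp
qed

lemma translates_to_ljp_All:
  assumes prem: "translates_to_ljp BV {#Br V M#} A"
    and x: "x \<in> V" "x \<in> BV" and bvA: "set (bv A) \<subseteq> BV" and BV: "finite BV" and A: "pos A"
  shows "translates_to_ljp BV M (All x A)"
  unfolding translates_to_ljp_def
proof (intro allI impI)
  fix r G D
  assume r: "avoids BV r" and rep: "ctxt_rep BV r M G" and D: "\<forall>B\<in>#D. neg B"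
  define S where "S = (\<Union>B\<in>set_mset (G + D). fv B) \<union> BV \<union> r ` fv A"
  have "finite S" unfolding S_def using BV by (simp add: finite_fv)
  then obtain y where y: "y \<notin> S" using ex_new_if_finite[OF infinite_UNIV_nat] by blast
  have r': "avoids BV (r(x := y))" using r y unfolding avoids_def S_def by auto
  have "item_rep BV (r(x := y)) (Br V M) G"
    by (rule item_rep_Br[OF rep _ r]) (use x(1) in auto)
  then have "ljp (G + D) (rename (r(x := y)) A)"
    using translates_to_ljpD[OF prem r' _ D] by simp
  moreover have "\<forall>B\<in>#G + D. y \<notin> fv B" using y unfolding S_def by auto
  moreover have "pos_seq (G + D) (All y (rename (r(x := y)) A))"
    using ctxt_rep_neg[OF rep] D A by (auto simp: pos_seq_def)
  ultimately have "ljp (G + D) (All y (rename (r(x := y)) A))"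
    by (rule ljp_RAll)
  moreover have "rel_mset alpha (G + D) (G + D)" by (simp add: multiset.rel_refl)
  moreover have "alpha (All y (rename (r(x := y)) A)) (rename r (All x A))"
    by (rule alpha_All_rename[OF r x(2) bvA]) (use y S_def in auto)
  ultimately show "ljp (G + D) (rename r (All x A))" by (rule ljp_alpha)
qed

lemma translates_to_ljp_Imp:
  assumes prem: "translates_to_ljp BV (add_mset (Fm A) M) B" and A: "neg A" and B: "pos B"
  shows "translates_to_ljp BV M (Imp A B)"
  unfolding translates_to_ljp_def
proof (intro allI impI)
  fix r G D
  assume r: "avoids BV r" and rep: "ctxt_rep BV r M G" and D: "\<forall>B\<in>#D. neg B"
  have "ctxt_rep BV r (add_mset (Fm A) M) (add_mset (rename r A) G)"
    using rep A by (force simp: ctxt_rep_add_mset_iff item_rep_Fm_iff)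
  then have "ljp (add_mset (rename r A) G + D) (rename r B)"
    by (rule translates_to_ljpD[OF prem r _ D])
  moreover have "\<forall>B\<in>#G + D. neg B" using ctxt_rep_neg[OF rep] D by auto
  ultimately show "ljp (G + D) (rename r (Imp A B))"
    using A B by (auto simp: pos_seq_def intro!: ljp_RImp)
qed

lemma translates_to_ljp_nf:
  "nf_strategy nf \<Longrightarrow> translates_to_ljp BV (nf M) A \<Longrightarrow> translates_to_ljp BV M A"
  by (rule translates_to_ljp_cleaning[OF nf_strategy_cleaning])

lemma ljb_translates_to_ljp:
  assumes nf: "nf_strategy nf" and BV: "finite BV"
  shows "ljb nf M A \<Longrightarrow> \<forall>B\<in>fms M. set (bv B) \<subseteq> BV \<Longrightarrow> set (bv A) \<subseteq> BV \<Longrightarrow>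
    translates_to_ljp BV M A"
proof (induction rule: ljb.induct)
  case (ljb_L C As p ts ps Gi)
  let ?X = "flipb ps + add_mset (Fm C) Gi"
  have fms: "\<forall>B\<in>fms (nf ?X). set (bv B) \<subseteq> BV"
    using fms_nf[OF nf, of ?X] ljb_L.prems(1) unfolding fms_flipb_union by blast
  have "\<forall>a\<in>set As. translates_to_ljp BV ?X a"
  proof
    fix a assume a: "a \<in> set As"
    have "set (bv a) \<subseteq> BV"
      using ljb_L.prems(1) a by (auto simp: ljb_L.hyps(1) fms_nest set_bv_foldr_Imp)
    with a fms ljb_L.IH have "translates_to_ljp BV (nf ?X) a" by blast
    then show "translates_to_ljp BV ?X a" by (rule translates_to_ljp_nf[OF nf])
  qed
  from ljb_L.hyps(1) this ljb_L.hyps(2) show ?case by (rule translates_to_ljp_L)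
next
  case (ljb_RAll x A M)
  let ?V = "set (bv (All x A))"
  have "fms (nf {#Br ?V M#}) \<subseteq> fms M"
    using fms_nf[OF nf, of "{#Br ?V M#}"] by (simp add: fms_def)
  then have "\<forall>B\<in>fms (nf {#Br ?V M#}). set (bv B) \<subseteq> BV"
    using ljb_RAll.prems(1) by blast
  with ljb_RAll.prems(2) have "translates_to_ljp BV (nf {#Br ?V M#}) A"
    by (intro ljb_RAll.IH) auto
  then have "translates_to_ljp BV {#Br ?V M#} A" by (rule translates_to_ljp_nf[OF nf])
  then show ?case
    by (rule translates_to_ljp_All) (use ljb_RAll.prems(2) ljb_RAll.hyps(2) BV in \<open>auto simp: ljb_seq_def\<close>)
next
  case (ljb_RImp A M B)
  have "\<forall>B\<in>fms (nf (add_mset (Fm A) M)). set (bv B) \<subseteq> BV"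
    using fms_nf[OF nf, of "add_mset (Fm A) M"] ljb_RImp.prems by auto
  with ljb_RImp.prems(2) have "translates_to_ljp BV (nf (add_mset (Fm A) M)) B"
    by (intro ljb_RImp.IH) auto
  then have "translates_to_ljp BV (add_mset (Fm A) M) B" by (rule translates_to_ljp_nf[OF nf])
  then show ?case
    by (rule translates_to_ljp_Imp) (use ljb_RImp.hyps(2) in \<open>auto simp: ljb_seq_def\<close>)
qed

theorem proposition7:
  fixes nf :: "item multiset \<Rightarrow> item multiset" and A :: fm
  assumes "nf_strategy nf"
    and "ljb nf {#} A"
  shows "ljp {#} A"
proof -
  have "translates_to_ljp (set (bv A)) {#} A"
    by (rule ljb_translates_to_ljp[OF assms(1) finite_set assms(2)]) simp_all
  moreover have "avoids (set (bv A)) (\<lambda>u. u)" by (simp add: avoids_def)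
  ultimately have "ljp ({#} + {#}) (rename (\<lambda>u. u) A)"
    by (rule translates_to_ljpD[OF _ _ ctxt_rep_empty]) simp
  then show ?thesis by simp
qed

end
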